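(* Let $a\geq 3$ be an odd integer, let $\alpha\in B_a$, let $n\geq 1$ be an integer, and let $r$ be an odd positive integer with $r\leq 2a^n$. Then the line $y=\alpha\left(x-\frac{r}{2a^n}\right)$ in $\mathbb{R}^2$ contains no point of the form $\left(\frac{u}{a^l},\frac{v}{a^m}\right)$ with $u,v,l,m\in\mathbb{Z}$.
   Context: For an odd integer $a\geq 3$, $$B_a=\left\{\frac{p}{q}\ :\ p+q\leq a-1,\ 0\leq p\leq q\leq a-2,\ p,q\in\mathbb{N},\ p\text{ and }q\text{ odd}\right\},$$ where $\mathbb{N}=\{1,2,3,\dots\}$. *)

theory Defs
  imports Complex_Main
begin

definition B :: "int \<Rightarrow> real set" where
  "B a = {of_int p / of_int q | p q :: int.
            1 \<le> p \<and> 1 \<le> q \<and> p + q \<le> a - 1 \<and> p \<le> q \<and> q \<le> a - 2 \<and> odd p \<and> odd q}"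

end

theory Submission
  imports Defs
begin

text \<open>Call a real number \<open>a\<close>-adic if some power of \<open>a\<close> clears its denominator. The \<open>a\<close>-adic
  numbers are closed under subtraction and integer multiples, and for odd \<open>a\<close> they cannot
  have an even denominator. Writing \<open>\<alpha> = p/q\<close> with \<open>p\<close> odd, a point of the line with
  \<open>a\<close>-adic coordinates would make \<open>p r / (2 a\<^sup>n)\<close> \<open>a\<close>-adic, although \<open>p r\<close> is odd.\<close>

definition adic_rationals :: "int \<Rightarrow> real set" where
  "adic_rationals a = {x. \<exists>k::nat. x * of_int a ^ k \<in> \<int>}"

lemma adic_rationals_int_div_powi:
  assumes "a \<noteq> 0"
  shows "of_int u / of_int a powi l \<in> adic_rationals a"
proof -
  define k where "k = nat \<bar>l\<bar>"
  have "(of_int a :: real) ^ k = of_int a powi (l + (int k - l))" by simp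
  also have "\<dots> = of_int a powi l * of_int a powi (int k - l)"
    using assms by (subst power_int_add) auto
  also have "of_int a powi (int k - l) = (of_int a :: real) ^ nat (int k - l)"
    by (simp add: k_def flip: power_int_of_nat)
  finally have "of_int u / of_int a powi l * of_int a ^ k = (of_int (u * a ^ nat (int k - l)) :: real)"
    using assms by simp
  then show ?thesis unfolding adic_rationals_def by (metis (mono_tags) Ints_of_int mem_Collect_eq)
qed

lemma adic_rationals_diff:
  assumes "x \<in> adic_rationals a" "y \<in> adic_rationals a"
  shows "x - y \<in> adic_rationals a"
proof -
  obtain i j where i: "x * of_int a ^ i \<in> \<int>" and j: "y * of_int a ^ j \<in> \<int>"
    using assms unfolding adic_rationals_def by blast
  have "(x - y) * of_int a ^ (i + j) = x * of_int a ^ i * of_int a ^ j - y * of_int a ^ j * of_int a ^ i"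
    by (simp add: power_add algebra_simps)
  also have "\<dots> \<in> \<int>" using i j by (simp add: Ints_diff Ints_mult)
  finally show ?thesis unfolding adic_rationals_def by blast
qed

lemma adic_rationals_int_mult:
  assumes "x \<in> adic_rationals a"
  shows "of_int c * x \<in> adic_rationals a"
proof -
  obtain k where "x * of_int a ^ k \<in> \<int>"
    using assms unfolding adic_rationals_def by blast
  then have "of_int c * x * of_int a ^ k \<in> \<int>"
    by (metis Ints_mult Ints_of_int mult.assoc)
  then show ?thesis unfolding adic_rationals_def by blast
qed

lemma odd_div_two_power_not_adic:
  assumes "odd a" "odd s"
  shows "of_int s / (2 * of_int a ^ n) \<notin> adic_rationals a"
proof
  assume "of_int s / (2 * of_int a ^ n) \<in> adic_rationals a"
  then obtain k z where z: "of_int s / (2 * of_int a ^ n) * of_int a ^ k = (of_int z :: real)"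
    unfolding adic_rationals_def by (auto elim!: Ints_cases)
  have "a \<noteq> 0" using \<open>odd a\<close> by auto
  with z have "(of_int (s * a ^ k) :: real) = of_int (2 * z * a ^ n)"
    by (simp add: field_simps)
  then have "s * a ^ k = 2 * z * a ^ n" by (simp only: of_int_eq_iff)
  moreover have "odd (s * a ^ k)" using assms by simp
  ultimately show False by simp
qed

theorem lemma3p2:
  fixes a :: int and \<alpha> :: real and n :: nat and r :: int
  assumes "odd a" and "a \<ge> 3"
    and "\<alpha> \<in> B a"
    and "n \<ge> 1"
    and "odd r" and "r > 0" and "r \<le> 2 * a ^ n"
  shows "\<not> (\<exists>u v l m :: int.
            of_int v / (of_int a powi m)
              = \<alpha> * (of_int u / (of_int a powi l) - of_int r / (2 * of_int a ^ n)))"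
proof (intro notI, elim exE)
  fix u v l m :: int
  assume eq: "of_int v / (of_int a powi m)
              = \<alpha> * (of_int u / (of_int a powi l) - of_int r / (2 * of_int a ^ n))"
  obtain p q :: int where \<alpha>: "\<alpha> = of_int p / of_int q" and "q \<ge> 1" and "odd p"
    using \<open>\<alpha> \<in> B a\<close> unfolding B_def by blast
  have "a \<noteq> 0" using \<open>a \<ge> 3\<close> by simp
  from eq \<open>q \<ge> 1\<close> have "(of_int (p * r) :: real) / (2 * of_int a ^ n)
      = of_int p * (of_int u / of_int a powi l) - of_int q * (of_int v / of_int a powi m)"
    unfolding \<alpha> by (simp add: field_simps)
  also have "\<dots> \<in> adic_rationals a"
    using \<open>a \<noteq> 0\<close>
    by (intro adic_rationals_diff adic_rationals_int_mult adic_rationals_int_div_powi)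
  finally show False
    using odd_div_two_power_not_adic[of a "p * r" n] \<open>odd a\<close> \<open>odd p\<close> \<open>odd r\<close> by simp
qed

end
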